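(* (a) For every single-qubit density matrix $\sigma$ there exist non-negative functions $w^0_\sigma,w^1_\sigma:\mathbb{Z}_2^2\to[0,\infty)$ with $\sum_{\mathbf{u}}(w^0_\sigma(\mathbf{u})+w^1_\sigma(\mathbf{u}))=1$ and $\sigma=\sum_{\mathbf{u}\in\mathbb{Z}_2^2}\big(w^0_\sigma(\mathbf{u})A^{0}(\mathbf{u})+w^1_\sigma(\mathbf{u})A^{a_xa_z}(\mathbf{u})\big)$, where $A^{a_xa_z}$ uses the single-qubit frame function $F(a_x,a_z)=a_xa_z$. (b) Consequently, every $n$-qubit product state $\rho=\bigotimes_{i=1}^n\rho_i$ has the non-negative representation $\rho=\sum_{\mathbf{b}\in\mathbb{Z}_2^n}\sum_{\mathbf{u}\in\mathbb{Z}_2^{2n}}W^{F_{\mathbf{b}}}(\mathbf{u})A^{F_{\mathbf{b}}}(\mathbf{u})$ over the set of frame functions $\mathcal{F}=\{F_{\mathbf{b}}:\mathbf{b}\in\mathbb{Z}_2^n\}$, $F_{\mathbf{b}}(\mathbf{a})=\sum_{i=1}^nb_ia_{ix}a_{iz}$, with product weights $W^{F_{\mathbf{b}}}(\mathbf{u})=\prod_{i=1}^nw^{b_i}_{\rho_i}(u_{ix},u_{iz})$.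
   Context: Let $n\ge 1$. Phase-space points are $\mathbf{u}=(\mathbf{u}_x,\mathbf{u}_z)=(u_{1x},\dots,u_{nx},u_{1z},\dots,u_{nz})\in\mathbb{Z}_2^{2n}$. For $\mathbf{a}\in\mathbb{Z}_2^{2n}$ let $T_{\mathbf{a}}=\bigotimes_{j=1}^n i^{a_{jx}a_{jz}}X^{a_{jx}}Z^{a_{jz}}$, where $X,Z$ are the single-qubit Pauli matrices. The symplectic product is $[\mathbf{u},\mathbf{a}]=\mathbf{u}_x\cdot\mathbf{a}_z+\mathbf{u}_z\cdot\mathbf{a}_x\pmod 2$. A frame function is any $F:\mathbb{Z}_2^{2n}\to\mathbb{Z}_2$ with $F(\mathbf{0})=0$. The phase point operator is $A^F(\mathbf{u})=2^{-n}\sum_{\mathbf{a}\in\mathbb{Z}_2^{2n}}(-1)^{[\mathbf{u},\mathbf{a}]+F(\mathbf{a})}T_{\mathbf{a}}$ (for $n=1$ this gives the single-qubit operators $A^0(\mathbf{u})$, $A^{a_xa_z}(\mathbf{u})$). A non-negative representation of $\rho$ over a finite set $\mathcal{F}$ of frame functions is a function $W:\mathcal{F}\times\mathbb{Z}_2^{2n}\to[0,\infty)$, $(F,\mathbf{u})\mapsto W^F(\mathbf{u})$, with $\sum_{F,\mathbf{u}}W^F(\mathbf{u})=1$ and $\rho=\sum_{F,\mathbf{u}}W^F(\mathbf{u})A^F(\mathbf{u})$. *)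

theory Defs
  imports Complex_Main
begin

text \<open>Computational basis of one qubit is indexed by bool (False = |0>, True = |1>).
  A single-qubit operator is a kernel bool => bool => complex (a 2x2 matrix).
  A bit string in Z_2^n is a function nat => bool vanishing from index n on;
  an n-qubit operator is a kernel on such bit strings (a 2^n x 2^n matrix).\<close>

type_synonym bits = "nat \<Rightarrow> bool"

definition Zn :: "nat \<Rightarrow> bits set" where
  "Zn n = {x. \<forall>i\<ge>n. \<not> x i}"

definition mmul1 :: "(bool \<Rightarrow> bool \<Rightarrow> complex) \<Rightarrow> (bool \<Rightarrow> bool \<Rightarrow> complex) \<Rightarrow> bool \<Rightarrow> bool \<Rightarrow> complex" where
  "mmul1 A B x y = (\<Sum>z\<in>UNIV. A x z * B z y)"

definition Id1 :: "bool \<Rightarrow> bool \<Rightarrow> complex" where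
  "Id1 x y = (if x = y then 1 else 0)"

definition PauliX :: "bool \<Rightarrow> bool \<Rightarrow> complex" where
  "PauliX x y = (if x \<noteq> y then 1 else 0)"

definition PauliZ :: "bool \<Rightarrow> bool \<Rightarrow> complex" where
  "PauliZ x y = (if x = y then (if x then -1 else 1) else 0)"

definition T1 :: "bool \<Rightarrow> bool \<Rightarrow> bool \<Rightarrow> bool \<Rightarrow> complex" where
  "T1 ax az = (\<lambda>x y. (if ax \<and> az then \<i> else 1) *
      mmul1 (if ax then PauliX else Id1) (if az then PauliZ else Id1) x y)"

definition Tn :: "nat \<Rightarrow> bits \<times> bits \<Rightarrow> bits \<Rightarrow> bits \<Rightarrow> complex" where
  "Tn n a x y = (\<Prod>j<n. T1 (fst a j) (snd a j) (x j) (y j))"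

definition symp :: "nat \<Rightarrow> bits \<times> bits \<Rightarrow> bits \<times> bits \<Rightarrow> nat" where
  "symp n u a = (\<Sum>j<n. of_bool (fst u j \<and> snd a j) + of_bool (snd u j \<and> fst a j)) mod 2"

text \<open>frame function on Z_2^{2n}: F(0) = 0 (Z_2 rendered as bool)\<close>
definition frame_function :: "(bits \<times> bits \<Rightarrow> bool) \<Rightarrow> bool" where
  "frame_function F \<longleftrightarrow> \<not> F (\<lambda>_. False, \<lambda>_. False)"

definition phase_point :: "nat \<Rightarrow> (bits \<times> bits \<Rightarrow> bool) \<Rightarrow> bits \<times> bits \<Rightarrow> bits \<Rightarrow> bits \<Rightarrow> complex" where
  "phase_point n F u x y = (1 / 2 ^ n) *
     (\<Sum>a\<in>Zn n \<times> Zn n. (-1) ^ (symp n u a + of_bool (F a)) * Tn n a x y)"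

definition phase_point1 :: "(bool \<times> bool \<Rightarrow> bool) \<Rightarrow> bool \<times> bool \<Rightarrow> bool \<Rightarrow> bool \<Rightarrow> complex" where
  "phase_point1 F u x y = (1 / 2) *
     (\<Sum>a\<in>UNIV. (-1) ^ ((of_bool (fst u \<and> snd a) + of_bool (snd u \<and> fst a)) + of_bool (F a))
                 * T1 (fst a) (snd a) x y)"

text \<open>A^0: frame function F = 0;  A^{a_x a_z}: frame function F(a_x,a_z) = a_x a_z\<close>
definition F0_1 :: "bool \<times> bool \<Rightarrow> bool" where "F0_1 a = False"
definition Fxz_1 :: "bool \<times> bool \<Rightarrow> bool" where "Fxz_1 a = (fst a \<and> snd a)"

definition density1 :: "(bool \<Rightarrow> bool \<Rightarrow> complex) \<Rightarrow> bool" where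
  "density1 \<sigma> \<longleftrightarrow>
     (\<forall>x y. \<sigma> x y = cnj (\<sigma> y x)) \<and>
     (\<forall>v :: bool \<Rightarrow> complex. 0 \<le> Re (\<Sum>x\<in>UNIV. \<Sum>y\<in>UNIV. cnj (v x) * \<sigma> x y * v y)) \<and>
     (\<Sum>x\<in>UNIV. \<sigma> x x) = 1"

text \<open>w^0, w^1 give a non-negative decomposition of sigma as in part (a);
  w b is w^b (b = False ~ 0, b = True ~ 1)\<close>
definition nonneg_decomp1 :: "(bool \<Rightarrow> bool \<Rightarrow> complex) \<Rightarrow> (bool \<Rightarrow> bool \<times> bool \<Rightarrow> real) \<Rightarrow> bool" where
  "nonneg_decomp1 \<sigma> w \<longleftrightarrow>
     (\<forall>b u. 0 \<le> w b u) \<and>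
     (\<Sum>u\<in>UNIV. w False u + w True u) = 1 \<and>
     (\<forall>x y. \<sigma> x y = (\<Sum>u\<in>UNIV. complex_of_real (w False u) * phase_point1 F0_1 u x y
                                   + complex_of_real (w True u) * phase_point1 Fxz_1 u x y))"

definition Fb :: "nat \<Rightarrow> bits \<Rightarrow> bits \<times> bits \<Rightarrow> bool" where
  "Fb n b a \<longleftrightarrow> odd (\<Sum>i<n. of_bool (b i \<and> fst a i \<and> snd a i) :: nat)"

definition product_state :: "nat \<Rightarrow> (nat \<Rightarrow> bool \<Rightarrow> bool \<Rightarrow> complex) \<Rightarrow> bits \<Rightarrow> bits \<Rightarrow> complex" where
  "product_state n \<rho> x y = (\<Prod>i<n. \<rho> i (x i) (y i))"

definition prod_weight :: "nat \<Rightarrow> (nat \<Rightarrow> bool \<Rightarrow> bool \<times> bool \<Rightarrow> real) \<Rightarrow> bits \<Rightarrow> bits \<times> bits \<Rightarrow> real" where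
  "prod_weight n w b u = (\<Prod>i<n. w i (b i) (fst u i, snd u i))"

end

theory Submission
  imports Defs
begin

text \<open>A qubit state is (I + r_x X + r_y Y + r_z Z)/2 with Bloch vector r in the unit ball,
  so in particular |r_k| \<le> 1. The eight single-qubit phase point operators A^0(u) and
  A^{a_x a_z}(u) are exactly the matrices (I \<plusminus> X \<plusminus> Y \<plusminus> Z)/2, the vertices of the cube [-1,1]^3
  in Bloch coordinates, and the product weights \<Prod>_k (1 \<plusminus> r_k)/8 express r as a convex
  combination of these vertices. For a product state, both A^{F_b}(u) and the weights factor
  over the qubits, so the single-qubit representations multiply to an n-qubit one.\<close>

lemma sum_UNIV_prod: "(\<Sum>u\<in>UNIV. f u) = (\<Sum>a\<in>UNIV. \<Sum>b\<in>UNIV. f (a, b))"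
  by (simp add: sum.cartesian_product)

lemma sum_Zn_Suc:
  "(\<Sum>x\<in>Zn (Suc n). f x) = (\<Sum>x\<in>Zn n. \<Sum>v\<in>UNIV. f (x(n := v)))"
proof -
  have "(\<Sum>x\<in>Zn (Suc n). f x) = (\<Sum>(x, v)\<in>Zn n \<times> UNIV. f (x(n := v)))"
    by (rule sum.reindex_bij_witness[where i = "\<lambda>(x, v). x(n := v)" and j = "\<lambda>x. (x(n := False), x n)"])
      (auto simp: Zn_def fun_eq_iff)
  then show ?thesis
    by (simp add: sum.cartesian_product)
qed

lemma sum_Zn_prod:
  fixes g :: "nat \<Rightarrow> bool \<Rightarrow> 'a::comm_semiring_1"
  shows "(\<Sum>x\<in>Zn n. \<Prod>i<n. g i (x i)) = (\<Prod>i<n. \<Sum>v\<in>UNIV. g i v)"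
proof (induction n)
  case 0
  have "Zn 0 = {\<lambda>_. False}"
    by (auto simp: Zn_def)
  then show ?case
    by simp
next
  case (Suc n)
  have "(\<Sum>x\<in>Zn (Suc n). \<Prod>i<Suc n. g i (x i)) = (\<Sum>x\<in>Zn n. \<Sum>v\<in>UNIV. (\<Prod>i<n. g i (x i)) * g n v)"
    by (simp add: sum_Zn_Suc)
  also have "\<dots> = (\<Sum>x\<in>Zn n. \<Prod>i<n. g i (x i)) * (\<Sum>v\<in>UNIV. g n v)"
    by (subst sum_distrib_right) (simp add: sum_distrib_left)
  finally show ?case
    using Suc.IH by simp
qed

lemma sum_Zn_Times_prod:
  fixes g :: "nat \<Rightarrow> bool \<Rightarrow> bool \<Rightarrow> 'a::comm_semiring_1"
  shows "(\<Sum>u\<in>Zn n \<times> Zn n. \<Prod>i<n. g i (fst u i) (snd u i)) = (\<Prod>i<n. \<Sum>p\<in>UNIV. \<Sum>q\<in>UNIV. g i p q)"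
proof -
  have "(\<Sum>u\<in>Zn n \<times> Zn n. \<Prod>i<n. g i (fst u i) (snd u i)) = (\<Sum>x\<in>Zn n. \<Sum>z\<in>Zn n. \<Prod>i<n. g i (x i) (z i))"
    by (simp add: sum.cartesian_product case_prod_beta)
  also have "\<dots> = (\<Sum>x\<in>Zn n. \<Prod>i<n. \<Sum>q\<in>UNIV. g i (x i) q)"
    by (simp add: sum_Zn_prod[where g = "\<lambda>i. g i (_ i)"])
  also have "\<dots> = (\<Prod>i<n. \<Sum>p\<in>UNIV. \<Sum>q\<in>UNIV. g i p q)"
    by (rule sum_Zn_prod)
  finally show ?thesis .
qed

lemma sum_Zn_Zn_Times_prod:
  fixes g :: "nat \<Rightarrow> bool \<Rightarrow> bool \<Rightarrow> bool \<Rightarrow> 'a::comm_semiring_1"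
  shows "(\<Sum>b\<in>Zn n. \<Sum>u\<in>Zn n \<times> Zn n. \<Prod>i<n. g i (b i) (fst u i) (snd u i))
       = (\<Prod>i<n. \<Sum>c\<in>UNIV. \<Sum>p\<in>UNIV. \<Sum>q\<in>UNIV. g i c p q)"
  using sum_Zn_prod[where g = "\<lambda>i c. \<Sum>p\<in>UNIV. \<Sum>q\<in>UNIV. g i c p q"]
  by (simp add: sum_Zn_Times_prod[where g = "\<lambda>i. g i (_ i)"])

definition bool_sign :: "bool \<Rightarrow> real" where
  "bool_sign b = (if b then -1 else 1)"

text \<open>\<open>bloch_matrix rx ry rz = (I + rx X + ry Y + rz Z)/2\<close>, with \<open>Y = T1 True True = i X Z\<close>.\<close>

definition bloch_matrix :: "real \<Rightarrow> real \<Rightarrow> real \<Rightarrow> bool \<Rightarrow> bool \<Rightarrow> complex" where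
  "bloch_matrix rx ry rz x y =
     (if x = y then complex_of_real ((1 + bool_sign x * rz) / 2)
      else Complex (rx / 2) (bool_sign y * ry / 2))"

definition bloch_x :: "(bool \<Rightarrow> bool \<Rightarrow> complex) \<Rightarrow> real" where
  "bloch_x \<sigma> = 2 * Re (\<sigma> False True)"

definition bloch_y :: "(bool \<Rightarrow> bool \<Rightarrow> complex) \<Rightarrow> real" where
  "bloch_y \<sigma> = - 2 * Im (\<sigma> False True)"

definition bloch_z :: "(bool \<Rightarrow> bool \<Rightarrow> complex) \<Rightarrow> real" where
  "bloch_z \<sigma> = Re (\<sigma> False False) - Re (\<sigma> True True)"

definition frame1 :: "bool \<Rightarrow> bool \<times> bool \<Rightarrow> bool" where
  "frame1 b = (if b then Fxz_1 else F0_1)"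

lemma frame1_simps: "frame1 False = F0_1" "frame1 True = Fxz_1"
  by (simp_all add: frame1_def)

definition cube_weight :: "real \<Rightarrow> real \<Rightarrow> real \<Rightarrow> bool \<Rightarrow> bool \<times> bool \<Rightarrow> real" where
  "cube_weight rx ry rz b u =
     (1 + bool_sign (snd u) * rx) * (1 + bool_sign ((fst u \<noteq> snd u) \<noteq> b) * ry) * (1 + bool_sign (fst u) * rz) / 8"

lemma hermitian_trace_one_bloch:
  assumes herm: "\<And>x y. \<sigma> x y = cnj (\<sigma> y x)" and trace: "(\<Sum>x\<in>UNIV. \<sigma> x x) = 1"
  shows "\<sigma> = bloch_matrix (bloch_x \<sigma>) (bloch_y \<sigma>) (bloch_z \<sigma>)"
proof -
  have "Im (\<sigma> x x) = 0" for x
    using arg_cong[OF herm[of x x], of Im] by simp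
  moreover have "\<sigma> True False = cnj (\<sigma> False True)"
    by (rule herm)
  moreover have "Re (\<sigma> False False) + Re (\<sigma> True True) = 1"
    using arg_cong[OF trace, of Re] by (simp add: UNIV_bool)
  ultimately show ?thesis
    by (auto simp: fun_eq_iff bloch_matrix_def bloch_x_def bloch_y_def bloch_z_def bool_sign_def
        complex_eq_iff)
qed

lemma T1_entries:
  "T1 False False x y = (if x = y then 1 else 0)"
  "T1 True False x y = (if x \<noteq> y then 1 else 0)"
  "T1 False True x y = (if x = y then (if x then -1 else 1) else 0)"
  "T1 True True x y = (if x \<noteq> y then (if y then -\<i> else \<i>) else 0)"
  by (auto simp: T1_def mmul1_def PauliX_def PauliZ_def Id1_def UNIV_bool)

lemma phase_point1_bloch:
  "phase_point1 (frame1 b) (p, q) x y = bloch_matrix (bool_sign q) (bool_sign ((p \<noteq> q) \<noteq> b)) (bool_sign p) x y"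
  unfolding phase_point1_def sum_UNIV_prod
  by (cases p; cases q; cases b; cases x; cases y)
    (simp_all add: UNIV_bool T1_entries frame1_def F0_1_def Fxz_1_def bloch_matrix_def bool_sign_def complex_eq_iff)

lemma bloch_matrix_psd_bounds:
  assumes psd: "\<And>v. 0 \<le> Re (\<Sum>x\<in>UNIV. \<Sum>y\<in>UNIV. cnj (v x) * bloch_matrix rx ry rz x y * v y)"
  shows "\<bar>rx\<bar> \<le> 1" "\<bar>ry\<bar> \<le> 1" "\<bar>rz\<bar> \<le> 1"
proof -
  have q: "0 \<le> Re (\<Sum>x\<in>UNIV. \<Sum>y\<in>UNIV. cnj (if x then c1 else c0) * bloch_matrix rx ry rz x y * (if y then c1 else c0))"
    for c0 c1
    by (rule psd)
  show "\<bar>rx\<bar> \<le> 1" using q[of 1 1] q[of 1 "-1"]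
    by (simp add: UNIV_bool bloch_matrix_def bool_sign_def field_simps)
  show "\<bar>ry\<bar> \<le> 1" using q[of 1 \<i>] q[of 1 "-\<i>"]
    by (simp add: UNIV_bool bloch_matrix_def bool_sign_def field_simps)
  show "\<bar>rz\<bar> \<le> 1" using q[of 1 0] q[of 0 1]
    by (simp add: UNIV_bool bloch_matrix_def bool_sign_def field_simps)
qed

lemma density1_bloch_bounds:
  assumes "density1 \<sigma>"
  shows "\<bar>bloch_x \<sigma>\<bar> \<le> 1" "\<bar>bloch_y \<sigma>\<bar> \<le> 1" "\<bar>bloch_z \<sigma>\<bar> \<le> 1"
proof -
  from assms have psd: "\<And>v. 0 \<le> Re (\<Sum>x\<in>UNIV. \<Sum>y\<in>UNIV. cnj (v x) * \<sigma> x y * v y)"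
    and bloch: "\<sigma> = bloch_matrix (bloch_x \<sigma>) (bloch_y \<sigma>) (bloch_z \<sigma>)"
    unfolding density1_def by (blast, blast intro: hermitian_trace_one_bloch)
  have "0 \<le> Re (\<Sum>x\<in>UNIV. \<Sum>y\<in>UNIV. cnj (v x) * bloch_matrix (bloch_x \<sigma>) (bloch_y \<sigma>) (bloch_z \<sigma>) x y * v y)"
    for v
    using psd[of v] by (subst (asm) bloch)
  then show "\<bar>bloch_x \<sigma>\<bar> \<le> 1" "\<bar>bloch_y \<sigma>\<bar> \<le> 1" "\<bar>bloch_z \<sigma>\<bar> \<le> 1"
    by (fact bloch_matrix_psd_bounds)+
qed

lemma cube_weight_nonneg:
  assumes "\<bar>rx\<bar> \<le> 1" "\<bar>ry\<bar> \<le> 1" "\<bar>rz\<bar> \<le> 1"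
  shows "0 \<le> cube_weight rx ry rz b u"
proof -
  have factor: "0 \<le> 1 + bool_sign c * r" if "\<bar>r\<bar> \<le> 1" for c r
    using that by (simp add: bool_sign_def abs_le_iff)
  show ?thesis
    unfolding cube_weight_def using assms by (intro divide_nonneg_pos mult_nonneg_nonneg factor) auto
qed

lemma cube_weight_sum: "(\<Sum>u\<in>UNIV. cube_weight rx ry rz False u + cube_weight rx ry rz True u) = 1"
  by (simp add: sum_UNIV_prod UNIV_bool cube_weight_def bool_sign_def field_simps)

lemma bloch_matrix_cube_decomposition:
  "bloch_matrix rx ry rz x y =
     (\<Sum>u\<in>UNIV. complex_of_real (cube_weight rx ry rz False u) * phase_point1 F0_1 u x y
              + complex_of_real (cube_weight rx ry rz True u) * phase_point1 Fxz_1 u x y)"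
  unfolding sum_UNIV_prod phase_point1_bloch[of False, unfolded frame1_simps] phase_point1_bloch[of True, unfolded frame1_simps]
  by (cases x; cases y)
    (simp_all add: sum_UNIV_prod UNIV_bool cube_weight_def bloch_matrix_def bool_sign_def complex_eq_iff field_simps)

lemma density1_nonneg_decomp1:
  assumes "density1 \<sigma>"
  shows "nonneg_decomp1 \<sigma> (cube_weight (bloch_x \<sigma>) (bloch_y \<sigma>) (bloch_z \<sigma>))"
proof -
  have "\<sigma> = bloch_matrix (bloch_x \<sigma>) (bloch_y \<sigma>) (bloch_z \<sigma>)"
    using assms unfolding density1_def by (blast intro: hermitian_trace_one_bloch)
  then show ?thesis
    unfolding nonneg_decomp1_def
    using cube_weight_nonneg[OF density1_bloch_bounds[OF assms]] cube_weight_sum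
    by (metis bloch_matrix_cube_decomposition)
qed

lemma phase_sign_tensor:
  "(-1::complex) ^ (symp n u a + of_bool (Fb n b a)) =
   (\<Prod>i<n. (-1) ^ (of_bool (fst u i \<and> snd a i) + of_bool (snd u i \<and> fst a i)
                   + of_bool (frame1 (b i) (fst a i, snd a i))))"
proof -
  have "(-1::complex) ^ (symp n u a + of_bool (Fb n b a)) =
        (-1) ^ (\<Sum>i<n. of_bool (fst u i \<and> snd a i) + of_bool (snd u i \<and> fst a i)) *
        (-1) ^ (\<Sum>i<n. of_bool (b i \<and> fst a i \<and> snd a i) :: nat)"
    by (simp add: symp_def Fb_def power_add minus_one_power_iff)
  also have "\<dots> = (\<Prod>i<n. (-1) ^ (of_bool (fst u i \<and> snd a i) + of_bool (snd u i \<and> fst a i)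
                   + of_bool (frame1 (b i) (fst a i, snd a i))))"
    unfolding power_sum prod.distrib[symmetric] power_add[symmetric]
    by (rule prod.cong) (auto simp: frame1_def Fxz_1_def F0_1_def)
  finally show ?thesis .
qed

lemma phase_point_Fb_tensor:
  "phase_point n (Fb n b) u x y =
   (\<Prod>i<n. phase_point1 (frame1 (b i)) (fst u i, snd u i) (x i) (y i))"
proof -
  define g where "g i p q = (-1::complex) ^ (of_bool (fst u i \<and> q) + of_bool (snd u i \<and> p)
                   + of_bool (frame1 (b i) (p, q))) * T1 p q (x i) (y i)" for i p q
  have "phase_point n (Fb n b) u x y = (1 / 2 ^ n) * (\<Sum>a\<in>Zn n \<times> Zn n. \<Prod>i<n. g i (fst a i) (snd a i))"
    unfolding phase_point_def phase_sign_tensor Tn_def g_def by (simp add: prod.distrib)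
  also have "\<dots> = (1 / 2 ^ n) * (\<Prod>i<n. \<Sum>p\<in>UNIV. \<Sum>q\<in>UNIV. g i p q)"
    by (simp add: sum_Zn_Times_prod)
  also have "\<dots> = (\<Prod>i<n. phase_point1 (frame1 (b i)) (fst u i, snd u i) (x i) (y i))"
    unfolding phase_point1_def g_def by (simp add: prod.distrib sum_UNIV_prod prod_dividef)
  finally show ?thesis .
qed

lemma nonneg_decomp1_sum_eq_1:
  "nonneg_decomp1 \<sigma> w \<Longrightarrow> (\<Sum>c\<in>UNIV. \<Sum>p\<in>UNIV. \<Sum>q\<in>UNIV. w c (p, q)) = 1"
  unfolding nonneg_decomp1_def by (simp add: sum_UNIV_prod[of "w _"] UNIV_bool sum.distrib)

lemma nonneg_decomp1_entry:
  "nonneg_decomp1 \<sigma> w \<Longrightarrow>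
     \<sigma> x y = (\<Sum>c\<in>UNIV. \<Sum>p\<in>UNIV. \<Sum>q\<in>UNIV.
                complex_of_real (w c (p, q)) * phase_point1 (frame1 c) (p, q) x y)"
  unfolding nonneg_decomp1_def by (simp add: sum_UNIV_prod UNIV_bool frame1_simps algebra_simps)

lemma prod_weight_sum_eq_1:
  assumes "\<forall>i<n. nonneg_decomp1 (\<rho> i) (w i)"
  shows "(\<Sum>b\<in>Zn n. \<Sum>u\<in>Zn n \<times> Zn n. prod_weight n w b u) = 1"
proof -
  have "(\<Sum>b\<in>Zn n. \<Sum>u\<in>Zn n \<times> Zn n. prod_weight n w b u) = (\<Prod>i<n. \<Sum>c\<in>UNIV. \<Sum>p\<in>UNIV. \<Sum>q\<in>UNIV. w i c (p, q))"
    unfolding prod_weight_def by (rule sum_Zn_Zn_Times_prod)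
  also have "\<dots> = 1"
    using assms by (auto intro!: prod.neutral nonneg_decomp1_sum_eq_1)
  finally show ?thesis .
qed

lemma product_state_decomposition:
  assumes "\<forall>i<n. nonneg_decomp1 (\<rho> i) (w i)"
  shows "product_state n \<rho> x y =
           (\<Sum>b\<in>Zn n. \<Sum>u\<in>Zn n \<times> Zn n. complex_of_real (prod_weight n w b u) * phase_point n (Fb n b) u x y)"
proof -
  have "product_state n \<rho> x y = (\<Prod>i<n. \<Sum>c\<in>UNIV. \<Sum>p\<in>UNIV. \<Sum>q\<in>UNIV.
      complex_of_real (w i c (p, q)) * phase_point1 (frame1 c) (p, q) (x i) (y i))"
    unfolding product_state_def using assms by (auto intro!: prod.cong nonneg_decomp1_entry)
  also have "\<dots> = (\<Sum>b\<in>Zn n. \<Sum>u\<in>Zn n \<times> Zn n. \<Prod>i<n. complex_of_real (w i (b i) (fst u i, snd u i))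
      * phase_point1 (frame1 (b i)) (fst u i, snd u i) (x i) (y i))"
    by (rule sum_Zn_Zn_Times_prod[symmetric])
  also have "\<dots> = (\<Sum>b\<in>Zn n. \<Sum>u\<in>Zn n \<times> Zn n.
      complex_of_real (prod_weight n w b u) * phase_point n (Fb n b) u x y)"
    by (simp add: prod.distrib phase_point_Fb_tensor prod_weight_def)
  finally show ?thesis .
qed

theorem mainTheorem8:
  shows "(\<forall>\<sigma>. density1 \<sigma> \<longrightarrow> (\<exists>w. nonneg_decomp1 \<sigma> w)) \<and>
         (\<forall>n \<rho> w. n \<ge> 1 \<longrightarrow> (\<forall>i<n. density1 (\<rho> i)) \<longrightarrow> (\<forall>i<n. nonneg_decomp1 (\<rho> i) (w i)) \<longrightarrow>
           (\<forall>b\<in>Zn n. frame_function (Fb n b)) \<and>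
           (\<forall>b\<in>Zn n. \<forall>u\<in>Zn n \<times> Zn n. 0 \<le> prod_weight n w b u) \<and>
           (\<Sum>b\<in>Zn n. \<Sum>u\<in>Zn n \<times> Zn n. prod_weight n w b u) = 1 \<and>
           (\<forall>x\<in>Zn n. \<forall>y\<in>Zn n. product_state n \<rho> x y =
              (\<Sum>b\<in>Zn n. \<Sum>u\<in>Zn n \<times> Zn n.
                 complex_of_real (prod_weight n w b u) * phase_point n (Fb n b) u x y)))"
proof (intro conjI allI impI ballI)
  fix \<sigma> :: "bool \<Rightarrow> bool \<Rightarrow> complex"
  assume "density1 \<sigma>"
  then show "\<exists>w. nonneg_decomp1 \<sigma> w"
    using density1_nonneg_decomp1 by blast
next
  fix n b
  show "frame_function (Fb n b)"
    by (simp add: frame_function_def Fb_def)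
next
  fix n \<rho> b u and w :: "nat \<Rightarrow> bool \<Rightarrow> bool \<times> bool \<Rightarrow> real"
  assume "\<forall>i<n. nonneg_decomp1 (\<rho> i) (w i)"
  then show "0 \<le> prod_weight n w b u"
    unfolding prod_weight_def nonneg_decomp1_def by (intro prod_nonneg) auto
next
  fix n \<rho> and w :: "nat \<Rightarrow> bool \<Rightarrow> bool \<times> bool \<Rightarrow> real"
  assume "\<forall>i<n. nonneg_decomp1 (\<rho> i) (w i)"
  then show "(\<Sum>b\<in>Zn n. \<Sum>u\<in>Zn n \<times> Zn n. prod_weight n w b u) = 1"
    and "product_state n \<rho> x y = (\<Sum>b\<in>Zn n. \<Sum>u\<in>Zn n \<times> Zn n.
           complex_of_real (prod_weight n w b u) * phase_point n (Fb n b) u x y)" for x y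
    by (fact prod_weight_sum_eq_1, fact product_state_decomposition)
qed

end
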